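(* For any $k$-atomic probability distributions $\Gamma,\Gamma'$ on $\mathbb R^d$, $$\sup_{\theta\in S^{d-1}}W_1(\Gamma_\theta,\Gamma'_\theta)\le W_1(\Gamma,\Gamma')\le k^2\sqrt d\,\sup_{\theta\in S^{d-1}}W_1(\Gamma_\theta,\Gamma'_\theta).$$
   Context: A $k$-atomic distribution is a probability distribution supported on at most $k$ points. For $\theta\in\mathbb R^d$, $\Gamma_\theta$ denotes the law of $\theta^\top U$ with $U\sim\Gamma$ (pushforward by $u\mapsto\theta^\top u$). $W_1(\Gamma,\Gamma')=\inf\mathbb E\|U-U'\|_2$ over couplings of $U\sim\Gamma$, $U'\sim\Gamma'$ (on $\mathbb R$ the norm is absolute value). $S^{d-1}$ is the unit sphere of $\mathbb R^d$. *)

theory Defs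
  imports "HOL-Probability.Probability"
begin

definition katomic :: "nat \<Rightarrow> 'a pmf \<Rightarrow> bool" where
  "katomic k p \<longleftrightarrow> finite (set_pmf p) \<and> card (set_pmf p) \<le> k"

definition couplings :: "'a pmf \<Rightarrow> 'b pmf \<Rightarrow> ('a \<times> 'b) pmf set" where
  "couplings p q = {r. map_pmf fst r = p \<and> map_pmf snd r = q}"

definition W1 :: "'a::real_normed_vector pmf \<Rightarrow> 'a pmf \<Rightarrow> real" where
  "W1 p q = (INF r \<in> couplings p q. measure_pmf.expectation r (\<lambda>(x, y). norm (x - y)))"

definition proj :: "'a::euclidean_space \<Rightarrow> 'a pmf \<Rightarrow> real pmf" where
  "proj \<theta> p = map_pmf (\<lambda>u. \<theta> \<bullet> u) p"

end

theory Submission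
  imports Defs
begin

(* Projecting along a unit vector shortens distances, which gives the lower bound.
   For the upper bound, the differences of support points of \<Gamma> and \<Gamma>' have at most k^2
   directions u. By Cavalieri's principle and a lower bound for the integral of
   (1 - s^2)^((d - 1)/2), the slab |c \<bullet> u| < e fills less than an e sqrt d share of the unit
   ball. So for e = 1 / (k^2 sqrt d) some point of the ball lies outside all these slabs, and also
   off the null hyperplanes on which the projection would merge two points of one support.
   Along the resulting unit vector \<theta>, every coupling of the projected measures lifts to a
   coupling of \<Gamma> and \<Gamma>' whose cost is at most k^2 sqrt d times larger. *)

lemma norm_power2_eq_inner_power2_plus_perp:
  fixes u c :: "'a::real_inner"
  assumes "norm u = 1"
  shows "norm c ^ 2 = (c \<bullet> u)^2 + norm (c - (c \<bullet> u) *\<^sub>R u) ^ 2"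
proof -
  have "u \<bullet> u = 1" using assms by (simp add: power2_norm_eq_inner[symmetric])
  then show ?thesis unfolding power2_norm_eq_inner
    by (simp add: inner_diff_left inner_diff_right inner_commute power2_eq_square algebra_simps)
qed

lemma norm_perp_le_norm:
  fixes u c :: "'a::real_inner"
  assumes "norm u = 1"
  shows "norm (c - (c \<bullet> u) *\<^sub>R u) \<le> norm c"
proof -
  have "norm (c - (c \<bullet> u) *\<^sub>R u) ^ 2 \<le> norm c ^ 2"
    using norm_power2_eq_inner_power2_plus_perp[OF assms, of c] by simp
  then show ?thesis by (simp add: power2_le_iff_abs_le)
qed

lemma additive_monotone_imp_linear:
  fixes \<phi> :: "real \<Rightarrow> real"
  assumes add: "\<And>a b. a \<ge> 0 \<Longrightarrow> b \<ge> 0 \<Longrightarrow> \<phi> (a + b) = \<phi> a + \<phi> b"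
    and mono: "\<And>a b. 0 \<le> a \<Longrightarrow> a \<le> b \<Longrightarrow> \<phi> a \<le> \<phi> b"
    and h: "h \<ge> 0"
  shows "\<phi> h = h * \<phi> 1"
proof -
  have zero: "\<phi> 0 = 0" using add[of 0 0] by simp
  have mult: "\<phi> (real m * x) = real m * \<phi> x" if "x \<ge> 0" for m x
  proof (induction m)
    case 0 then show ?case using zero by simp
  next
    case (Suc m)
    have "\<phi> (real (Suc m) * x) = \<phi> (real m * x + x)" by (simp add: algebra_simps)
    also have "\<dots> = \<phi> (real m * x) + \<phi> x" using that by (intro add) auto
    finally show ?case using Suc by (simp add: algebra_simps)
  qed
  define Z where "Z = \<phi> 1"
  have Z: "Z \<ge> 0" using mono[of 0 1] zero by (simp add: Z_def)
  have approx: "\<bar>\<phi> h - h * Z\<bar> \<le> Z / real m" if m: "m \<ge> 1" for m :: nat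
  proof -
    have m_pos: "real m > 0" using m by simp
    have unit_fraction: "\<phi> (1 / real m) = Z / real m"
      using mult[of "1/real m" m] m_pos by (simp add: Z_def field_simps)
    define q where "q = nat \<lfloor>real m * h\<rfloor>"
    have "real q \<le> real m * h" "real m * h < real q + 1"
      using h m_pos unfolding q_def by simp_all
    then have lo: "real q / real m \<le> h" and hi: "h \<le> (real q + 1) / real m"
      using m_pos by (simp_all add: field_simps)
    have "\<phi> (real q / real m) = real q * Z / real m"
      using mult[of "1/real m" q] m_pos unit_fraction by simp
    then have "real q * Z / real m \<le> \<phi> h" using mono[OF _ lo] m_pos by simp
    moreover have "\<phi> ((real q + 1) / real m) = (real q + 1) * Z / real m"
      using mult[of "1/real m" "q+1"] m_pos unit_fraction by (simp add: add.commute)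
    then have "\<phi> h \<le> (real q + 1) * Z / real m" using mono[OF h hi] by simp
    moreover have "real q * Z / real m \<le> h * Z" "h * Z \<le> (real q + 1) * Z / real m"
      using mult_right_mono[OF lo Z] mult_right_mono[OF hi Z] by simp_all
    ultimately show ?thesis by (simp add: abs_le_iff distrib_right add_divide_distrib)
  qed
  show ?thesis
  proof (rule ccontr)
    assume "\<phi> h \<noteq> h * \<phi> 1"
    then have pos: "\<bar>\<phi> h - h * Z\<bar> > 0" by (simp add: Z_def)
    obtain m :: nat where m: "real m > Z / \<bar>\<phi> h - h * Z\<bar>" using reals_Archimedean2 by blast
    then have "m \<ge> 1" using Z pos
      by (metis divide_nonneg_pos less_one not_le of_nat_0)
    then have "\<bar>\<phi> h - h * Z\<bar> * real m \<le> Z" using approx by (simp add: field_simps)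
    moreover have "Z < real m * \<bar>\<phi> h - h * Z\<bar>" using m pos by (simp add: field_simps)
    ultimately show False by (simp add: mult.commute)
  qed
qed

text \<open>\<open>cross_section (d - 1) s\<close> is the \<open>(d - 1)\<close>-volume of the section of the unit ball of
  \<open>\<real>\<^sup>d\<close> at height \<open>s\<close>, relative to the central section.\<close>
definition cross_section :: "nat \<Rightarrow> real \<Rightarrow> real" where
  "cross_section n s = sqrt (1 - s^2) ^ n"

lemma cross_section_antimono:
  "0 \<le> a \<Longrightarrow> a \<le> b \<Longrightarrow> b \<le> 1 \<Longrightarrow> cross_section n b \<le> cross_section n a"
  unfolding cross_section_def
  by (intro power_mono real_sqrt_le_mono) (auto intro: power_mono simp: power_le_one)

lemma isCont_cross_section: "isCont (cross_section n) x"
  unfolding cross_section_def by (intro continuous_intros)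

lemma continuous_on_cross_section: "continuous_on S (cross_section n)"
  by (simp add: continuous_at_imp_continuous_on isCont_cross_section)

lemma antiderivative_le_integral:
  fixes f p P :: "real \<Rightarrow> real"
  assumes "a \<le> b" and P: "\<And>s. (P has_real_derivative p s) (at s)"
    and f: "continuous_on {a..b} f" and le: "\<And>s. s \<in> {a..b} \<Longrightarrow> p s \<le> f s"
  shows "P b - P a \<le> integral {a..b} f"
proof (rule has_integral_le[OF _ integrable_integral le])
  show "(p has_integral P b - P a) {a..b}"
    using assms(1) P
    by (intro fundamental_theorem_of_calculus)
       (auto simp: has_real_derivative_iff_has_vector_derivative[symmetric] intro: DERIV_subset)
  show "f integrable_on {a..b}" using f by (rule integrable_continuous_interval)
qed

lemma integral_cross_section_bound_by_antiderivative:
  assumes "0 \<le> X" and P: "\<And>s. (P has_real_derivative p s) (at s)"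
    and le: "\<And>s. s \<in> {0..X} \<Longrightarrow> p s \<le> cross_section n s"
    and pos: "0 < P X - P 0" and large: "1 < (P X - P 0)^2 * (real n + 1)"
  shows "1 < sqrt (real n + 1) * integral {0..X} (cross_section n)"
proof -
  have "sqrt (real n + 1) * (P X - P 0) = sqrt ((P X - P 0)^2 * (real n + 1))"
    using pos by (simp add: real_sqrt_mult)
  also have "1 < \<dots>" using large by (simp add: real_less_rsqrt)
  finally have "1 < sqrt (real n + 1) * (P X - P 0)" .
  moreover have "P X - P 0 \<le> integral {0..X} (cross_section n)"
    using assms(1) P continuous_on_cross_section le by (rule antiderivative_le_integral)
  then have "sqrt (real n + 1) * (P X - P 0) \<le> sqrt (real n + 1) * integral {0..X} (cross_section n)"
    by (rule mult_left_mono) simp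
  ultimately show ?thesis by linarith
qed

lemma sqrt_mult_integral_cross_section_1_gt:
  "1 < sqrt (real 1 + 1) * integral {0..99/100} (cross_section 1)"
proof (rule integral_cross_section_bound_by_antiderivative)
  define P where "P s = s - s^3/6 - s^5/10" for s :: real
  show "(P has_real_derivative 1 - s^2/2 - s^4/2) (at s)" for s
    unfolding P_def by (auto intro!: derivative_eq_intros)
  show "0 < P (99/100) - P 0" "1 < (P (99/100) - P 0)^2 * (real 1 + 1)"
    by (auto simp: P_def eval_nat_numeral)
  fix s :: real assume s: "s \<in> {0..99/100}"
  define y where "y = s^2"
  have y: "0 \<le> y" "y \<le> 1" unfolding y_def using s by (auto simp: power_le_one)
  have "(1 - y/2 - y^2/2)^2 = (1 - y) * ((4 - 3*y^2 - y^3) / 4)"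
    by (simp add: power2_eq_square power3_eq_cube algebra_simps)
  also have "\<dots> \<le> 1 - y"
    using y by (intro mult_left_le) (auto intro: order.trans[of _ 0] simp: zero_le_power)
  finally have "1 - y/2 - y^2/2 \<le> sqrt (1 - y)" by (rule real_le_rsqrt)
  then show "1 - s^2/2 - s^4/2 \<le> cross_section 1 s"
    by (simp add: cross_section_def y_def power_mult[symmetric])
qed simp

lemma sqrt_mult_integral_cross_section_2_gt:
  "1 < sqrt (real 2 + 1) * integral {0..9/10} (cross_section 2)"
proof (rule integral_cross_section_bound_by_antiderivative)
  define P where "P s = s - s^3/3" for s :: real
  show "(P has_real_derivative 1 - s^2) (at s)" for s
    unfolding P_def by (auto intro!: derivative_eq_intros)
  show "0 < P (9/10) - P 0" "1 < (P (9/10) - P 0)^2 * (real 2 + 1)"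
    by (auto simp: P_def eval_nat_numeral)
  fix s :: real assume "s \<in> {0..9/10}"
  then have "s^2 \<le> 1" by (auto simp: power_le_one)
  then show "1 - s^2 \<le> cross_section 2 s" by (simp add: cross_section_def)
qed simp

lemma sqrt_mult_integral_cross_section_3_4_gt:
  assumes "n = 3 \<or> n = 4"
  shows "1 < sqrt (real n + 1) * integral {0..9/10} (cross_section n)"
proof (rule integral_cross_section_bound_by_antiderivative)
  define P where "P s = s - (2/3) * s^3 + s^5/5" for s :: real
  show "(P has_real_derivative (1 - s^2)^2) (at s)" for s
    unfolding P_def
    by (auto intro!: derivative_eq_intros simp: power2_eq_square algebra_simps eval_nat_numeral)
  show "0 < P (9/10) - P 0" "1 < (P (9/10) - P 0)^2 * (real n + 1)"
    using assms by (auto simp: P_def eval_nat_numeral)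
  fix s :: real assume "s \<in> {0..9/10}"
  then have s2: "s^2 \<le> 1" by (auto simp: power_le_one)
  then have "sqrt (1 - s^2) ^ 4 \<le> sqrt (1 - s^2) ^ n"
    using assms by (intro power_decreasing) auto
  moreover have "sqrt (1 - s^2) ^ 4 = (sqrt (1 - s^2) ^ 2)^2"
    by (simp flip: power_mult)
  then have "sqrt (1 - s^2) ^ 4 = (1 - s^2)^2" using s2 by simp
  ultimately show "(1 - s^2)^2 \<le> cross_section n s" by (simp add: cross_section_def)
qed simp

lemma one_minus_mult_le_powr:
  fixes a y :: real
  assumes a: "a \<ge> 1" and y: "0 \<le> y" "y < 1"
  shows "1 - a * y \<le> (1 - y) powr a"
proof -
  define f where "f x = (1 - x) powr a - (1 - a * x)" for x :: real
  have "f 0 \<le> f y"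
  proof (rule DERIV_nonneg_imp_nondecreasing[where f=f])
    show "0 \<le> y" using y by simp
    fix x assume x: "0 \<le> x" "x \<le> y"
    then have x1: "1 - x > 0" using y by simp
    have "(f has_real_derivative a - a * (1 - x) powr (a - 1)) (at x)"
      unfolding f_def using x1 by (auto intro!: derivative_eq_intros)
    moreover have "(1 - x) powr (a - 1) \<le> 1"
      using x1 x a by (intro powr_le1) auto
    then have "a - a * (1 - x) powr (a - 1) \<ge> 0" using a
      by (simp add: mult_left_le_one_le)
    ultimately show "\<exists>d. (f has_real_derivative d) (at x) \<and> 0 \<le> d" by blast
  qed
  then show ?thesis unfolding f_def by simp
qed

lemma sqrt_mult_integral_cross_section_ge_5_gt:
  assumes n: "n \<ge> 5"
  shows "1 < sqrt (real n + 1) * integral {0..2 / sqrt (real n)} (cross_section n)"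
proof -
  define a where "a = real n / 4"
  define X where "X = 2 / sqrt (real n)"
  have a: "a \<ge> 5/4" using n unfolding a_def by simp
  have X: "X > 0" "X^2 = 1 / a" using n by (simp_all add: X_def a_def power_divide)
  define P where "P s = s - (2/3) * a * s^3 + (1/5) * a^2 * s^5" for s :: real
  have PX: "P X - P 0 = 8 * X / 15"
  proof -
    have "P X = X * (1 - 2*a*X^2/3 + a^2*(X^2)^2/5)"
      unfolding P_def by (simp add: power2_eq_square power3_eq_cube algebra_simps eval_nat_numeral)
    also have "\<dots> = 8 * X / 15" using X a by (simp add: field_simps power2_eq_square)
    finally show ?thesis by (simp add: P_def)
  qed
  show ?thesis unfolding X_def[symmetric]
  proof (rule integral_cross_section_bound_by_antiderivative)
    show "(P has_real_derivative (1 - a * s^2)^2) (at s)" for s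
      unfolding P_def
      by (auto intro!: derivative_eq_intros simp: power2_eq_square algebra_simps eval_nat_numeral)
    show "0 < P X - P 0" using PX X by simp
    have "(P X - P 0)^2 * (real n + 1) = 256 * (real n + 1) / (225 * real n)"
      using n unfolding PX by (simp add: X_def power_divide field_simps)
    also have "\<dots> > 1" using n by (simp add: field_simps)
    finally show "1 < (P X - P 0)^2 * (real n + 1)" .
    fix s :: real assume s: "s \<in> {0..X}"
    define y where "y = s^2"
    have "s^2 \<le> X^2" using s by (intro power_mono) auto
    then have y: "0 \<le> y" "y \<le> 1 / a" using X by (simp_all add: y_def)
    then have ay: "a * y \<le> 1" using a by (simp add: field_simps)
    moreover have "5/4 * y \<le> a * y" using a y by (intro mult_right_mono) auto
    ultimately have y1: "y < 1" by linarith
    have "(1 - a * y)^2 \<le> ((1 - y) powr a)^2"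
      using one_minus_mult_le_powr[of a y] a y y1 ay by (intro power_mono) auto
    also have "((1 - y) powr a)^2 = ((1 - y) powr (1/2)) ^ n"
      using y1 by (simp add: a_def powr_powr powr_realpow[symmetric] power2_eq_square
          powr_add[symmetric])
    also have "\<dots> = cross_section n s"
      using y1 by (simp add: cross_section_def y_def powr_half_sqrt)
    finally show "(1 - a * s^2)^2 \<le> cross_section n s" by (simp add: y_def)
  qed (use X in simp)
qed

lemma exists_integral_cross_section_bound:
  assumes "n \<ge> 1"
  shows "\<exists>X. 0 < X \<and> X < 1 \<and> 1 < sqrt (real n + 1) * integral {0..X} (cross_section n)"
proof -
  consider "n = 1" | "n = 2" | "n = 3 \<or> n = 4" | "n \<ge> 5" using assms by linarith
  then show ?thesis
  proof cases
    case 1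
    then show ?thesis using sqrt_mult_integral_cross_section_1_gt by (intro exI[of _ "99/100"]) auto
  next
    case 2
    then show ?thesis using sqrt_mult_integral_cross_section_2_gt by (intro exI[of _ "9/10"]) auto
  next
    case 3
    then show ?thesis using sqrt_mult_integral_cross_section_3_4_gt by (intro exI[of _ "9/10"]) auto
  next
    case 4
    have "2 / sqrt (real n) < 1"
      using 4 by (simp add: divide_less_eq real_less_rsqrt)
    then show ?thesis using 4 sqrt_mult_integral_cross_section_ge_5_gt
      by (intro exI[of _ "2 / sqrt (real n)"]) auto
  qed
qed

definition cylinder :: "'a::euclidean_space \<Rightarrow> real \<Rightarrow> real \<Rightarrow> real \<Rightarrow> 'a set" where
  "cylinder u a h r = {c. a < c \<bullet> u \<and> c \<bullet> u \<le> a + h \<and> norm (c - (c \<bullet> u) *\<^sub>R u) \<le> r}"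

text \<open>Stands in for the \<open>(d - 1)\<close>-volume of the unit ball of \<open>u\<^sup>\<bottom>\<close>; only its positivity is used.\<close>
definition unit_cylinder_volume :: "'a::euclidean_space \<Rightarrow> real" where
  "unit_cylinder_volume u = measure lebesgue (cylinder u 0 1 1)"

definition ball_slice :: "'a::euclidean_space \<Rightarrow> real \<Rightarrow> real \<Rightarrow> 'a set" where
  "ball_slice u a h = ball 0 1 \<inter> {c. a < c \<bullet> u \<and> c \<bullet> u \<le> a + h}"

definition slice_volume :: "'a::euclidean_space \<Rightarrow> real \<Rightarrow> real" where
  "slice_volume u h = measure lebesgue (ball_slice u 0 h)"

lemma cylinder_sets_lebesgue: "cylinder u a h r \<in> sets lebesgue"
proof -
  have eq: "cylinder u a h r
      = {c. u \<bullet> c > a} \<inter> {c. u \<bullet> c \<le> a + h} \<inter> {c. norm (c - (c \<bullet> u) *\<^sub>R u) \<le> r}"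
    by (auto simp: cylinder_def inner_commute)
  have "closed {c. norm (c - (c \<bullet> u) *\<^sub>R u) \<le> r}"
    by (intro closed_Collect_le continuous_intros)
  then show ?thesis unfolding eq
    by (intro sets.Int borel_open borel_closed open_halfspace_gt closed_halfspace_le) auto
qed

lemma ball_slice_lmeasurable: "ball_slice u a h \<in> lmeasurable"
proof (rule bounded_set_imp_lmeasurable)
  have eq: "ball_slice u a h = ball 0 1 \<inter> {c. u \<bullet> c > a} \<inter> {c. u \<bullet> c \<le> a + h}"
    by (auto simp: ball_slice_def inner_commute)
  show "ball_slice u a h \<in> sets lebesgue" unfolding eq
    by (intro sets.Int borel_open borel_closed open_halfspace_gt closed_halfspace_le open_ball) auto
  show "bounded (ball_slice u a h)" unfolding ball_slice_def by (simp add: bounded_Int)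
qed

lemma slice_volume_uminus: "slice_volume (- u) h = slice_volume u h"
proof -
  have reflect: "ball_slice (- u) 0 h = (\<lambda>x. (-1) *\<^sub>R x + 0) ` ball_slice u 0 h"
  proof (intro set_eqI iffI)
    fix y assume "y \<in> ball_slice (- u) 0 h"
    then have "- y \<in> ball_slice u 0 h" by (simp add: ball_slice_def)
    then show "y \<in> (\<lambda>x. (-1) *\<^sub>R x + 0) ` ball_slice u 0 h"
      by (intro image_eqI[of _ _ "- y"]) auto
  qed (auto simp: ball_slice_def)
  show ?thesis
    unfolding slice_volume_def reflect measure_lebesgue_affine by simp
qed

lemma slice_volume_zero [simp]: "slice_volume u 0 = 0"
proof -
  have "ball_slice u 0 0 = {}" by (auto simp: ball_slice_def)
  then show ?thesis by (simp add: slice_volume_def)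
qed

lemma slice_volume_add:
  assumes "0 \<le> h" "0 \<le> d"
  shows "slice_volume u (h + d) = slice_volume u h + measure lebesgue (ball_slice u h d)"
proof -
  have "ball_slice u 0 (h + d) = ball_slice u 0 h \<union> ball_slice u h d"
    using assms by (auto simp: ball_slice_def)
  moreover have "ball_slice u 0 h \<inter> ball_slice u h d = {}" by (auto simp: ball_slice_def)
  ultimately show ?thesis
    unfolding slice_volume_def
    using measure_Un3[OF ball_slice_lmeasurable ball_slice_lmeasurable, of u 0 h u h d] by simp
qed

lemma ball_slab_sets_lebesgue: "ball 0 1 \<inter> {c. \<bar>c \<bullet> u\<bar> < \<epsilon>} \<in> sets lebesgue"
proof -
  have "ball 0 1 \<inter> {c. \<bar>c \<bullet> u\<bar> < \<epsilon>} = ball 0 1 \<inter> {c. u \<bullet> c < \<epsilon>} \<inter> {c. u \<bullet> c > - \<epsilon>}"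
    by (auto simp: inner_commute)
  then show ?thesis by (simp add: sets.Int borel_open open_halfspace_lt open_halfspace_gt)
qed

lemma two_slice_volume_le_measure_ball:
  fixes u :: "'a::euclidean_space"
  shows "2 * slice_volume u h \<le> measure lebesgue (ball (0::'a) 1)"
proof -
  have "ball_slice u 0 h \<inter> ball_slice (- u) 0 h = {}" by (auto simp: ball_slice_def)
  then have "measure lebesgue (ball_slice u 0 h \<union> ball_slice (- u) 0 h) = 2 * slice_volume u h"
    using measure_Un3[OF ball_slice_lmeasurable ball_slice_lmeasurable, of u 0 h "- u" 0 h]
    by (simp add: slice_volume_def[symmetric] slice_volume_uminus)
  moreover have "measure lebesgue (ball_slice u 0 h \<union> ball_slice (- u) 0 h) \<le> measure lebesgue (ball (0::'a) 1)"
    by (intro measure_mono_fmeasurable fmeasurableD fmeasurable.Un ball_slice_lmeasurable lmeasurable_ball)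
       (auto simp: ball_slice_def)
  ultimately show ?thesis by simp
qed

context
  fixes u :: "'a::euclidean_space"
  assumes u: "norm u = 1"
begin

lemma cylinder_lmeasurable: "cylinder u a h r \<in> lmeasurable"
proof (rule bounded_set_imp_lmeasurable[OF _ cylinder_sets_lebesgue])
  have "norm c \<le> \<bar>a\<bar> + \<bar>h\<bar> + \<bar>r\<bar>" if c: "c \<in> cylinder u a h r" for c
  proof -
    have "norm c \<le> norm ((c \<bullet> u) *\<^sub>R u) + norm (c - (c \<bullet> u) *\<^sub>R u)"
      by (metis add.commute diff_add_cancel norm_triangle_ineq)
    also have "\<dots> \<le> (\<bar>a\<bar> + \<bar>h\<bar>) + \<bar>r\<bar>"
      using c u by (intro add_mono) (auto simp: cylinder_def)
    finally show ?thesis .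
  qed
  then show "bounded (cylinder u a h r)" by (meson bounded_iff)
qed

lemma measure_cylinder_translate:
  "measure lebesgue (cylinder u a h r) = measure lebesgue (cylinder u 0 h r)"
proof -
  have "(\<lambda>x. 1 *\<^sub>R x + a *\<^sub>R u) ` cylinder u 0 h r = cylinder u a h r"
  proof (intro set_eqI iffI)
    fix y assume "y \<in> (\<lambda>x. 1 *\<^sub>R x + a *\<^sub>R u) ` cylinder u 0 h r"
    then show "y \<in> cylinder u a h r"
      by (auto simp: cylinder_def inner_add_left u[unfolded norm_eq_1] algebra_simps)
  next
    fix y assume "y \<in> cylinder u a h r"
    then have "y - a *\<^sub>R u \<in> cylinder u 0 h r"
      by (auto simp: cylinder_def inner_diff_left u[unfolded norm_eq_1] algebra_simps)
    then show "y \<in> (\<lambda>x. 1 *\<^sub>R x + a *\<^sub>R u) ` cylinder u 0 h r"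
      by (intro image_eqI[of _ _ "y - a *\<^sub>R u"]) auto
  qed
  then show ?thesis using measure_lebesgue_affine[of 1 "a *\<^sub>R u" "cylinder u 0 h r"] by simp
qed

lemma measure_cylinder_scale:
  assumes r: "r > 0"
  shows "measure lebesgue (cylinder u 0 (r * h) r) = r ^ DIM('a) * measure lebesgue (cylinder u 0 h 1)"
proof -
  have perp: "r *\<^sub>R x - (r * (x \<bullet> u)) *\<^sub>R u = r *\<^sub>R (x - (x \<bullet> u) *\<^sub>R u)" for x r
    by (simp add: algebra_simps)
  have "(\<lambda>x. r *\<^sub>R x + 0) ` cylinder u 0 h 1 = cylinder u 0 (r * h) r"
  proof (intro set_eqI iffI)
    fix y assume "y \<in> (\<lambda>x. r *\<^sub>R x + 0) ` cylinder u 0 h 1"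
    then show "y \<in> cylinder u 0 (r * h) r"
      using r by (auto simp: cylinder_def perp mult_left_mono)
  next
    fix y assume y: "y \<in> cylinder u 0 (r * h) r"
    define x where "x = (1 / r) *\<^sub>R y"
    have yx: "y = r *\<^sub>R x" using r by (simp add: x_def)
    have "x \<in> cylinder u 0 h 1"
      using y r unfolding yx by (auto simp: cylinder_def perp zero_less_mult_iff)
    then show "y \<in> (\<lambda>x. r *\<^sub>R x + 0) ` cylinder u 0 h 1" using yx by auto
  qed
  then show ?thesis using r by (metis measure_lebesgue_affine abs_of_pos)
qed

lemma measure_cylinder_add:
  assumes "h1 \<ge> 0" "h2 \<ge> 0"
  shows "measure lebesgue (cylinder u 0 (h1 + h2) r)
       = measure lebesgue (cylinder u 0 h1 r) + measure lebesgue (cylinder u 0 h2 r)"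
proof -
  have "cylinder u 0 (h1 + h2) r = cylinder u 0 h1 r \<union> cylinder u h1 h2 r"
    using assms by (auto simp: cylinder_def)
  moreover have "cylinder u 0 h1 r \<inter> cylinder u h1 h2 r = {}" by (auto simp: cylinder_def)
  ultimately show ?thesis
    using measure_Un3[OF cylinder_lmeasurable cylinder_lmeasurable, of 0 h1 r h1 h2 r]
      measure_cylinder_translate[of h1 h2 r] by simp
qed

lemma measure_cylinder_mono:
  "0 \<le> a \<Longrightarrow> a \<le> b \<Longrightarrow> measure lebesgue (cylinder u 0 a r) \<le> measure lebesgue (cylinder u 0 b r)"
  by (intro measure_mono_fmeasurable cylinder_sets_lebesgue cylinder_lmeasurable)
     (auto simp: cylinder_def)

text \<open>The volume is additive and monotone in the height, hence linear in it; scaling by \<open>r\<close>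
  then accounts for the radius.\<close>
lemma measure_cylinder:
  assumes h: "h \<ge> 0" and r: "r > 0"
  shows "measure lebesgue (cylinder u a h r) = h * r ^ (DIM('a) - 1) * unit_cylinder_volume u"
proof -
  have linear: "measure lebesgue (cylinder u 0 t 1) = t * unit_cylinder_volume u" if "t \<ge> 0" for t
    unfolding unit_cylinder_volume_def
    by (rule additive_monotone_imp_linear[OF _ _ that])
       (simp_all add: measure_cylinder_add measure_cylinder_mono)
  have "r ^ DIM('a) = r ^ Suc (DIM('a) - 1)" by simp
  then have "r ^ DIM('a) = r * r ^ (DIM('a) - 1)" by (simp only: power_Suc)
  have "measure lebesgue (cylinder u a h r) = measure lebesgue (cylinder u 0 (r * (h / r)) r)"
    using measure_cylinder_translate[of a h r] r by simp
  also have "\<dots> = r ^ DIM('a) * measure lebesgue (cylinder u 0 (h / r) 1)"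
    by (rule measure_cylinder_scale[OF r])
  also have "\<dots> = h * r ^ (DIM('a) - 1) * unit_cylinder_volume u"
    using h r \<open>r ^ DIM('a) = r * r ^ (DIM('a) - 1)\<close> by (simp add: linear)
  finally show ?thesis .
qed

lemma unit_cylinder_volume_pos: "unit_cylinder_volume u > 0"
proof -
  have "ball ((1/2) *\<^sub>R u) (1/4) \<subseteq> cylinder u 0 1 1"
  proof
    fix c assume "c \<in> ball ((1/2) *\<^sub>R u) (1/4)"
    moreover define w where "w = c - (1/2) *\<^sub>R u"
    ultimately have w: "norm w < 1/4" by (simp add: dist_norm norm_minus_commute)
    have cu: "c \<bullet> u = 1/2 + w \<bullet> u" by (simp add: w_def inner_diff_left u[unfolded norm_eq_1])
    have "\<bar>w \<bullet> u\<bar> \<le> norm w" using Cauchy_Schwarz_ineq2[of w u] u by simp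
    moreover have "c - (c \<bullet> u) *\<^sub>R u = w - (w \<bullet> u) *\<^sub>R u"
      unfolding cu by (simp add: w_def algebra_simps)
    ultimately show "c \<in> cylinder u 0 1 1"
      using w cu norm_perp_le_norm[OF u, of w] by (auto simp: cylinder_def)
  qed
  then have "measure lebesgue (ball ((1/2) *\<^sub>R u) (1/4)) \<le> unit_cylinder_volume u"
    unfolding unit_cylinder_volume_def
    by (intro measure_mono_fmeasurable fmeasurableD lmeasurable_ball cylinder_lmeasurable u)
  moreover have "0 < measure lebesgue (ball ((1/2) *\<^sub>R u) (1/4))"
    by (simp add: measure_completion content_ball_pos)
  ultimately show ?thesis by linarith
qed

text \<open>A slice of the unit ball of thickness \<open>d\<close> at height \<open>h\<close> lies in a cylinder of radius
  \<open>sqrt (1 - h\<^sup>2)\<close> and contains one of radius \<open>sqrt (1 - (h + 2 d)\<^sup>2)\<close>.\<close>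
lemma measure_ball_slice_le:
  assumes h: "0 \<le> h" "h < 1" and d: "0 \<le> d"
  shows "measure lebesgue (ball_slice u h d) \<le> d * cross_section (DIM('a) - 1) h * unit_cylinder_volume u"
proof -
  have "ball_slice u h d \<subseteq> cylinder u h d (sqrt (1 - h^2))"
  proof
    fix c assume "c \<in> ball_slice u h d"
    then have c: "norm c < 1" "h < c \<bullet> u" "c \<bullet> u \<le> h + d" by (auto simp: ball_slice_def)
    have "h^2 \<le> (c \<bullet> u)^2" using h c by (intro power_mono) auto
    moreover have "norm c ^ 2 < 1" using c by (simp add: power_less_one_iff)
    ultimately have "norm (c - (c \<bullet> u) *\<^sub>R u) ^ 2 \<le> 1 - h^2"
      using norm_power2_eq_inner_power2_plus_perp[OF u, of c] by linarith
    then show "c \<in> cylinder u h d (sqrt (1 - h^2))"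
      using c by (simp add: cylinder_def real_le_rsqrt)
  qed
  then have "measure lebesgue (ball_slice u h d) \<le> measure lebesgue (cylinder u h d (sqrt (1 - h^2)))"
    by (intro measure_mono_fmeasurable fmeasurableD ball_slice_lmeasurable cylinder_lmeasurable u)
  also have "\<dots> = d * cross_section (DIM('a) - 1) h * unit_cylinder_volume u"
    using h d by (simp add: measure_cylinder power_less_one_iff cross_section_def)
  finally show ?thesis .
qed

lemma measure_ball_slice_ge:
  assumes h: "0 \<le> h" and d: "0 < d" and hd: "h + 2 * d < 1"
  shows "d * cross_section (DIM('a) - 1) (h + 2 * d) * unit_cylinder_volume u
       \<le> measure lebesgue (ball_slice u h d)"
proof -
  define \<rho> where "\<rho> = sqrt (1 - (h + 2 * d)^2)"
  have \<rho>: "\<rho> > 0" "\<rho>^2 = 1 - (h + 2 * d)^2"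
    using h d hd unfolding \<rho>_def by (simp_all add: power_less_one_iff power_le_one)
  have "cylinder u h d \<rho> \<subseteq> ball_slice u h d"
  proof
    fix c assume "c \<in> cylinder u h d \<rho>"
    then have c: "h < c \<bullet> u" "c \<bullet> u \<le> h + d" "norm (c - (c \<bullet> u) *\<^sub>R u) \<le> \<rho>"
      by (auto simp: cylinder_def)
    have "(c \<bullet> u)^2 \<le> (h + d)^2" using h c by (intro power_mono) auto
    moreover have "norm (c - (c \<bullet> u) *\<^sub>R u)^2 \<le> \<rho>^2" using c by (intro power_mono) auto
    moreover have "(h + d)^2 < (h + 2 * d)^2" using h d by (intro power_strict_mono) auto
    ultimately have "norm c ^ 2 < 1"
      using norm_power2_eq_inner_power2_plus_perp[OF u, of c] \<rho> by linarith
    then show "c \<in> ball_slice u h d" using c by (simp add: ball_slice_def power_less_one_iff)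
  qed
  then have "measure lebesgue (cylinder u h d \<rho>) \<le> measure lebesgue (ball_slice u h d)"
    by (intro measure_mono_fmeasurable fmeasurableD ball_slice_lmeasurable cylinder_lmeasurable u)
  moreover have "measure lebesgue (cylinder u h d \<rho>)
      = d * cross_section (DIM('a) - 1) (h + 2 * d) * unit_cylinder_volume u"
    using d \<rho> by (simp add: measure_cylinder cross_section_def \<rho>_def)
  ultimately show ?thesis by simp
qed

lemma slice_volume_difference_quotient_bounds:
  assumes h: "0 < h" "h < 1" and D: "D \<noteq> 0" "\<bar>D\<bar> < h" "\<bar>D\<bar> < (1 - h) / 3"
  shows "unit_cylinder_volume u * cross_section (DIM('a) - 1) (h + 2 * \<bar>D\<bar>)
           \<le> (slice_volume u (h + D) - slice_volume u h) / D"
    and "(slice_volume u (h + D) - slice_volume u h) / D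
           \<le> unit_cylinder_volume u * cross_section (DIM('a) - 1) (h - \<bar>D\<bar>)"
proof -
  define e where "e = \<bar>D\<bar>"
  define l where "l = min h (h + D)"
  have e: "0 < e" "e < h" "e < (1 - h) / 3" using D by (auto simp: e_def)
  have l: "l = h - e \<or> l = h" "0 \<le> l" "l + 2 * e < 1" using h e by (auto simp: l_def e_def)
  have quotient: "(slice_volume u (h + D) - slice_volume u h) / D = measure lebesgue (ball_slice u l e) / e"
  proof (cases "D > 0")
    case True
    then show ?thesis using slice_volume_add[of h D u] h by (simp add: l_def e_def)
  next
    case False
    then have "slice_volume u h = slice_volume u (h + D) + measure lebesgue (ball_slice u (h + D) e)"
      using slice_volume_add[of "h + D" "- D" u] e by (simp add: e_def)
    then show ?thesis using False D by (simp add: l_def e_def divide_simps)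
  qed
  have "cross_section (DIM('a) - 1) (h + 2 * e) \<le> cross_section (DIM('a) - 1) (l + 2 * e)"
    using l e by (intro cross_section_antimono) auto
  then have "e * unit_cylinder_volume u * cross_section (DIM('a) - 1) (h + 2 * e)
      \<le> measure lebesgue (ball_slice u l e)"
    using measure_ball_slice_ge[OF l(2) e(1) l(3)] e unit_cylinder_volume_pos
    by (smt (verit) mult.commute mult.left_commute mult_left_mono)
  then show "unit_cylinder_volume u * cross_section (DIM('a) - 1) (h + 2 * \<bar>D\<bar>)
      \<le> (slice_volume u (h + D) - slice_volume u h) / D"
    using e unfolding quotient by (simp add: e_def pos_le_divide_eq mult.commute mult.left_commute)
  have "cross_section (DIM('a) - 1) l \<le> cross_section (DIM('a) - 1) (h - e)"
    using l e by (intro cross_section_antimono) auto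
  then have "measure lebesgue (ball_slice u l e)
      \<le> e * unit_cylinder_volume u * cross_section (DIM('a) - 1) (h - e)"
    using measure_ball_slice_le[OF l(2) _, of e] l e unit_cylinder_volume_pos
    by (smt (verit) mult.commute mult.left_commute mult_left_mono)
  then show "(slice_volume u (h + D) - slice_volume u h) / D
      \<le> unit_cylinder_volume u * cross_section (DIM('a) - 1) (h - \<bar>D\<bar>)"
    using e unfolding quotient by (simp add: e_def pos_divide_le_eq mult.commute mult.left_commute)
qed

lemma slice_volume_has_real_derivative:
  assumes h: "0 < h" "h < 1"
  shows "(slice_volume u has_real_derivative
           unit_cylinder_volume u * cross_section (DIM('a) - 1) h) (at h)"
  unfolding DERIV_def
proof (rule tendsto_sandwich)
  have "eventually (\<lambda>D. D \<noteq> 0 \<and> \<bar>D\<bar> < h \<and> \<bar>D\<bar> < (1 - h) / 3) (at (0::real))"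
    unfolding eventually_at using h by (intro exI[of _ "min h ((1 - h) / 3)"]) auto
  then show "eventually (\<lambda>D. unit_cylinder_volume u * cross_section (DIM('a) - 1) (h + 2 * \<bar>D\<bar>)
        \<le> (slice_volume u (h + D) - slice_volume u h) / D) (at 0)"
    and "eventually (\<lambda>D. (slice_volume u (h + D) - slice_volume u h) / D
        \<le> unit_cylinder_volume u * cross_section (DIM('a) - 1) (h - \<bar>D\<bar>)) (at 0)"
    by (eventually_elim, use slice_volume_difference_quotient_bounds h in blast)+
  have "((\<lambda>D. h + 2 * \<bar>D\<bar>) \<longlongrightarrow> h) (at (0::real))" "((\<lambda>D. h - \<bar>D\<bar>) \<longlongrightarrow> h) (at (0::real))"
    by (auto intro!: tendsto_eq_intros)
  then show "((\<lambda>D. unit_cylinder_volume u * cross_section (DIM('a) - 1) (h + 2 * \<bar>D\<bar>))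
        \<longlongrightarrow> unit_cylinder_volume u * cross_section (DIM('a) - 1) h) (at 0)"
    and "((\<lambda>D. unit_cylinder_volume u * cross_section (DIM('a) - 1) (h - \<bar>D\<bar>))
        \<longlongrightarrow> unit_cylinder_volume u * cross_section (DIM('a) - 1) h) (at 0)"
    by (auto intro!: tendsto_mult_left isCont_tendsto_compose[OF isCont_cross_section])
qed

lemma continuous_on_slice_volume:
  assumes "X < 1"
  shows "continuous_on {0..X} (slice_volume u)"
  unfolding continuous_on_eq_continuous_within
proof
  fix x assume x: "x \<in> {0..X}"
  show "continuous (at x within {0..X}) (slice_volume u)"
  proof (cases "x = 0")
    case False
    then have "0 < x" "x < 1" using x assms by auto
    from DERIV_isCont[OF slice_volume_has_real_derivative[OF this]] show ?thesis
      by (rule continuous_at_imp_continuous_within)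
  next
    case True
    have bounds: "0 \<le> slice_volume u y \<and> slice_volume u y \<le> y * unit_cylinder_volume u"
      if "y \<in> {0..X}" for y
      using measure_ball_slice_le[of 0 y] that
      by (simp add: slice_volume_def cross_section_def)
    have "(slice_volume u \<longlongrightarrow> 0) (at 0 within {0..X})"
    proof (rule tendsto_sandwich[of "\<lambda>_. 0" _ _ "\<lambda>y. y * unit_cylinder_volume u"])
      show "eventually (\<lambda>y. 0 \<le> slice_volume u y) (at 0 within {0..X})"
        and "eventually (\<lambda>y. slice_volume u y \<le> y * unit_cylinder_volume u) (at 0 within {0..X})"
        using bounds by (auto simp: eventually_at_filter)
      show "((\<lambda>y. y * unit_cylinder_volume u) \<longlongrightarrow> 0) (at 0 within {0..X})"
        by (auto intro!: tendsto_eq_intros)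
    qed simp
    then show ?thesis using True slice_volume_zero by (simp add: continuous_within)
  qed
qed

lemma slice_volume_eq_integral:
  assumes "0 \<le> X" "X < 1"
  shows "slice_volume u X = unit_cylinder_volume u * integral {0..X} (cross_section (DIM('a) - 1))"
proof -
  have "((\<lambda>s. unit_cylinder_volume u * cross_section (DIM('a) - 1) s)
      has_integral slice_volume u X - slice_volume u 0) {0..X}"
  proof (rule fundamental_theorem_of_calculus_interior)
    show "continuous_on {0..X} (slice_volume u)" using assms(2) by (rule continuous_on_slice_volume)
    show "(slice_volume u has_vector_derivative unit_cylinder_volume u * cross_section (DIM('a) - 1) s)
        (at s)" if "s \<in> {0<..<X}" for s
      using slice_volume_has_real_derivative[of s] that assms
      by (simp add: has_real_derivative_iff_has_vector_derivative)
  qed (use assms in simp)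
  from integral_unique[OF this] show ?thesis by (simp add: slice_volume_zero)
qed

lemma measure_ball_slab_less:
  assumes dim: "DIM('a) \<ge> 2" and \<epsilon>: "\<epsilon> > 0"
  shows "measure lebesgue (ball 0 1 \<inter> {c. \<bar>c \<bullet> u\<bar> < \<epsilon>})
       < \<epsilon> * sqrt (DIM('a)) * measure lebesgue (ball (0::'a) 1)"
proof -
  have "DIM('a) - 1 \<ge> 1" and dim_eq: "real (DIM('a) - 1) + 1 = real DIM('a)" using dim by auto
  then obtain X where X: "0 < X" "X < 1"
    and large: "1 < sqrt (real DIM('a)) * integral {0..X} (cross_section (DIM('a) - 1))"
    unfolding dim_eq[symmetric] using exists_integral_cross_section_bound by blast
  have "unit_cylinder_volume u < sqrt DIM('a) * slice_volume u X"
    using mult_strict_left_mono[OF large unit_cylinder_volume_pos] dim X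
    by (simp add: slice_volume_eq_integral mult.left_commute)
  have "ball 0 1 \<inter> {c. \<bar>c \<bullet> u\<bar> < \<epsilon>} \<subseteq> cylinder u (- \<epsilon>) (2 * \<epsilon>) 1"
  proof
    fix c assume "c \<in> ball 0 1 \<inter> {c. \<bar>c \<bullet> u\<bar> < \<epsilon>}"
    then show "c \<in> cylinder u (- \<epsilon>) (2 * \<epsilon>) 1"
      using norm_perp_le_norm[OF u, of c] by (auto simp: cylinder_def)
  qed
  then have "measure lebesgue (ball 0 1 \<inter> {c. \<bar>c \<bullet> u\<bar> < \<epsilon>})
      \<le> measure lebesgue (cylinder u (- \<epsilon>) (2 * \<epsilon>) 1)"
    using ball_slab_sets_lebesgue cylinder_lmeasurable by (rule measure_mono_fmeasurable)
  also have "\<dots> = 2 * \<epsilon> * unit_cylinder_volume u" using \<epsilon> by (simp add: measure_cylinder)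
  also have "\<dots> < \<epsilon> * sqrt DIM('a) * (2 * slice_volume u X)"
    using \<open>unit_cylinder_volume u < sqrt DIM('a) * slice_volume u X\<close> \<epsilon> by simp
  also have "\<dots> \<le> \<epsilon> * sqrt DIM('a) * measure lebesgue (ball (0::'a) 1)"
    using \<epsilon> two_slice_volume_le_measure_ball[of u X] by (intro mult_left_mono) auto
  finally show ?thesis .
qed

end

lemma abs_inner_eq_norm_mult_norm_if_DIM_1:
  fixes x y :: "'a::euclidean_space"
  assumes "DIM('a) = 1"
  shows "\<bar>x \<bullet> y\<bar> = norm x * norm y"
proof -
  obtain b :: 'a where B: "Basis = {b}" using assms by (metis card_1_singletonE)
  then have b: "b \<bullet> b = 1" by (metis inner_Basis singletonI)
  have x: "x = (x \<bullet> b) *\<^sub>R b" and y: "y = (y \<bullet> b) *\<^sub>R b"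
    using euclidean_representation[of x] euclidean_representation[of y] unfolding B by simp_all
  have "x \<bullet> y = (x \<bullet> b) * (y \<bullet> b)" by (subst x, subst y) (simp add: b)
  moreover have "norm x = \<bar>x \<bullet> b\<bar>" "norm y = \<bar>y \<bullet> b\<bar>"
    by (subst x, simp add: b norm_Basis B, subst y, simp add: b norm_Basis B)
  ultimately show ?thesis by (simp add: abs_mult)
qed

text \<open>Union bound: each of the at most \<open>N\<close> slabs \<open>\<bar>c \<bullet> u\<bar> < 1 / (N sqrt d)\<close> has less than
  a \<open>1/N\<close> share of the ball, and the hyperplanes orthogonal to \<open>W\<close> are null sets.\<close>
lemma exists_in_ball_avoiding_slabs:
  fixes U W :: "'a::euclidean_space set"
  assumes dim: "DIM('a) \<ge> 2" and U: "finite U" "\<forall>u\<in>U. norm u = 1" "card U \<le> N"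
    and W: "finite W" "0 \<notin> W" and N: "N \<ge> 1"
  shows "\<exists>c\<in>ball 0 1. (\<forall>u\<in>U. 1 / (real N * sqrt DIM('a)) \<le> \<bar>c \<bullet> u\<bar>) \<and> (\<forall>w\<in>W. c \<bullet> w \<noteq> 0)"
proof (rule ccontr)
  define \<epsilon> where "\<epsilon> = 1 / (real N * sqrt DIM('a))"
  have \<epsilon>: "\<epsilon> > 0" using N by (simp add: \<epsilon>_def)
  define slab where "slab u = ball (0::'a) 1 \<inter> {c. \<bar>c \<bullet> u\<bar> < \<epsilon>}" for u
  define H where "H = ball 0 1 \<inter> (\<Union>w\<in>W. {c. w \<bullet> c = 0})"
  have slab_sets: "slab u \<in> sets lebesgue" for u
    unfolding slab_def by (rule ball_slab_sets_lebesgue)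
  have "negligible (\<Union>w\<in>W. {c. w \<bullet> c = 0})"
    using W by (intro negligible_Union) (auto intro: negligible_hyperplane)
  then have H: "H \<in> null_sets lebesgue"
    unfolding H_def negligible_iff_null_sets[symmetric] by (rule negligible_subset) auto
  assume "\<not> ?thesis"
  then have "ball 0 1 \<subseteq> (\<Union>u\<in>U. slab u) \<union> H"
    by (force simp: slab_def H_def \<epsilon>_def inner_commute)
  moreover have "(\<Union>u\<in>U. slab u) \<in> sets lebesgue" using U(1) slab_sets by auto
  moreover have "bounded ((\<Union>u\<in>U. slab u) \<union> H)"
    by (rule bounded_subset[OF bounded_ball[of 0 1]]) (auto simp: slab_def H_def)
  ultimately have "measure lebesgue (ball (0::'a) 1) \<le> measure lebesgue ((\<Union>u\<in>U. slab u) \<union> H)"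
    using H by (intro measure_mono_fmeasurable bounded_set_imp_lmeasurable) auto
  also have "\<dots> = measure lebesgue (\<Union>u\<in>U. slab u)"
    using U(1) slab_sets H by (intro measure_Un_null_set) auto
  also have "\<dots> \<le> (\<Sum>u\<in>U. measure lebesgue (slab u))"
    using U(1) slab_sets by (rule measure_UNION_le)
  finally have covered: "measure lebesgue (ball (0::'a) 1) \<le> (\<Sum>u\<in>U. measure lebesgue (slab u))" .
  have ball_pos: "measure lebesgue (ball (0::'a) 1) > 0"
    by (simp add: measure_completion content_ball_pos)
  show False
  proof (cases "U = {}")
    case True
    then show False using covered ball_pos by (simp only: sum.empty)
  next
    case False
    have "(\<Sum>u\<in>U. measure lebesgue (slab u)) < (\<Sum>u\<in>U. \<epsilon> * sqrt DIM('a) * measure lebesgue (ball (0::'a) 1))"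
      using U False dim \<epsilon> unfolding slab_def
      by (intro sum_strict_mono measure_ball_slab_less) auto
    also have "\<dots> \<le> real N * \<epsilon> * sqrt DIM('a) * measure lebesgue (ball (0::'a) 1)"
      using U(3) \<epsilon> ball_pos by (simp add: mult_right_mono)
    also have "\<dots> = measure lebesgue (ball (0::'a) 1)"
      using N by (simp add: \<epsilon>_def)
    finally show False using covered by simp
  qed
qed

lemma exists_unit_vector_avoiding_slabs:
  fixes U W :: "'a::euclidean_space set"
  assumes U: "finite U" "\<forall>u\<in>U. norm u = 1" "card U \<le> N"
    and W: "finite W" "0 \<notin> W" and N: "N \<ge> 1"
  shows "\<exists>\<theta>. norm \<theta> = 1 \<and> (\<forall>u\<in>U. 1 / (real N * sqrt DIM('a)) \<le> \<bar>\<theta> \<bullet> u\<bar>) \<and> (\<forall>w\<in>W. \<theta> \<bullet> w \<noteq> 0)"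
proof -
  obtain b :: 'a where b: "b \<in> Basis" using nonempty_Basis by blast
  consider "DIM('a) = 1" | "DIM('a) \<ge> 2" using DIM_positive[where 'a='a] by linarith
  then show ?thesis
  proof cases
    case 1
    then have "\<bar>b \<bullet> u\<bar> = 1" if "u \<in> U" for u
      using abs_inner_eq_norm_mult_norm_if_DIM_1[of b u] U that b by simp
    moreover have "1 / (real N * sqrt DIM('a)) \<le> 1" using N 1 by simp
    moreover have "b \<bullet> w \<noteq> 0" if "w \<in> W" for w
      using abs_inner_eq_norm_mult_norm_if_DIM_1[OF 1, of b w] W that b by auto
    ultimately show ?thesis using b by (intro exI[of _ b]) auto
  next
    case 2
    text \<open>Adding \<open>b\<close> to \<open>W\<close> rules out the centre of the ball.\<close>
    have "0 \<notin> insert b W" using W b by (auto simp: nonzero_Basis)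
    then obtain c where c: "c \<in> ball 0 1" "\<forall>u\<in>U. 1 / (real N * sqrt DIM('a)) \<le> \<bar>c \<bullet> u\<bar>"
      "\<forall>w\<in>insert b W. c \<bullet> w \<noteq> 0"
      using exists_in_ball_avoiding_slabs[OF 2 U, of "insert b W"] W N by blast
    then have c_norm: "0 < norm c" "norm c < 1" by auto
    have "\<bar>c \<bullet> u\<bar> \<le> \<bar>sgn c \<bullet> u\<bar>" for u
      using c_norm by (simp add: sgn_div_norm abs_mult field_simps mult_left_le_one_le)
    then show ?thesis using c c_norm
      by (intro exI[of _ "sgn c"]) (auto simp: norm_sgn sgn_div_norm intro: order_trans)
  qed
qed

lemma exists_unit_vector_separating:
  fixes S S' :: "'a::euclidean_space set"
  assumes S: "finite S" "finite S'" and N: "card S * card S' \<le> N" "N \<ge> 1"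
  shows "\<exists>\<theta>. norm \<theta> = 1 \<and> inj_on ((\<bullet>) \<theta>) S \<and> inj_on ((\<bullet>) \<theta>) S'
           \<and> (\<forall>x\<in>S. \<forall>y\<in>S'. norm (x - y) \<le> real N * sqrt DIM('a) * \<bar>\<theta> \<bullet> (x - y)\<bar>)"
proof -
  define U where "U = (\<lambda>(x, y). sgn (x - y)) ` {(x, y) \<in> S \<times> S'. x \<noteq> y}"
  define W where "W = (\<lambda>(x, y). x - y) ` ({(x, y) \<in> S \<times> S. x \<noteq> y} \<union> {(x, y) \<in> S' \<times> S'. x \<noteq> y})"
  have pairs: "finite {(x, y) \<in> T \<times> T'. x \<noteq> y}" if "finite T" "finite T'" for T T' :: "'a set"
    by (rule finite_subset[of _ "T \<times> T'"]) (use that in auto)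
  have "card U \<le> card (S \<times> S')"
    unfolding U_def using S pairs by (intro card_image_le[THEN order_trans] card_mono) auto
  then have "card U \<le> N" using N by (simp add: card_cartesian_product)
  moreover have "finite U" "\<forall>u\<in>U. norm u = 1" "finite W" "0 \<notin> W"
    using S pairs by (auto simp: U_def W_def norm_sgn)
  ultimately obtain \<theta> :: 'a where \<theta>: "norm \<theta> = 1"
    and separating: "\<forall>u\<in>U. 1 / (real N * sqrt DIM('a)) \<le> \<bar>\<theta> \<bullet> u\<bar>"
    and injective: "\<forall>w\<in>W. \<theta> \<bullet> w \<noteq> 0"
    using exists_unit_vector_avoiding_slabs N by blast
  have "inj_on ((\<bullet>) \<theta>) T" if "T = S \<or> T = S'" for T
    using injective that by (intro inj_onI) (force simp: W_def inner_diff_right)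
  moreover have "norm (x - y) \<le> real N * sqrt DIM('a) * \<bar>\<theta> \<bullet> (x - y)\<bar>" if "x \<in> S" "y \<in> S'" for x y
  proof (cases "x = y")
    case False
    then have "1 / (real N * sqrt DIM('a)) \<le> \<bar>\<theta> \<bullet> sgn (x - y)\<bar>"
      using separating that by (auto simp: U_def)
    also have "\<dots> = \<bar>\<theta> \<bullet> (x - y)\<bar> / norm (x - y)"
      by (simp add: sgn_div_norm abs_mult divide_inverse mult.commute)
    finally show ?thesis using False N by (simp add: field_simps)
  qed simp
  ultimately show ?thesis using \<theta> by blast
qed

lemma pair_pmf_in_couplings: "pair_pmf p q \<in> couplings p q"
  by (simp add: couplings_def map_fst_pair_pmf map_snd_pair_pmf)

lemma set_pmf_subset_if_in_couplings:
  assumes "r \<in> couplings p q"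
  shows "set_pmf r \<subseteq> set_pmf p \<times> set_pmf q"
  using assms by (force simp: couplings_def)

lemma finite_set_pmf_if_in_couplings:
  assumes "r \<in> couplings p q" "finite (set_pmf p)" "finite (set_pmf q)"
  shows "finite (set_pmf r)"
  using set_pmf_subset_if_in_couplings[OF assms(1)] assms(2,3) by (meson finite_SigmaI finite_subset)

lemma W1_le_expectation:
  assumes "r \<in> couplings p q"
  shows "W1 p q \<le> measure_pmf.expectation r (\<lambda>(x, y). norm (x - y))"
  unfolding W1_def
proof (rule cINF_lower[OF _ assms])
  show "bdd_below ((\<lambda>r. measure_pmf.expectation r (\<lambda>(x, y). norm (x - y))) ` couplings p q)"
    by (intro bdd_belowI[of _ 0]) (auto intro!: Bochner_Integration.integral_nonneg split: prod.splits)
qed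

lemma W1_proj_le_W1:
  fixes \<Gamma> \<Gamma>' :: "'a::euclidean_space pmf"
  assumes fin: "finite (set_pmf \<Gamma>)" "finite (set_pmf \<Gamma>')" and \<theta>: "norm \<theta> \<le> 1"
  shows "W1 (proj \<theta> \<Gamma>) (proj \<theta> \<Gamma>') \<le> W1 \<Gamma> \<Gamma>'"
  unfolding W1_def[of \<Gamma>]
proof (rule cINF_greatest)
  show "couplings \<Gamma> \<Gamma>' \<noteq> {}" using pair_pmf_in_couplings by blast
  fix r assume r: "r \<in> couplings \<Gamma> \<Gamma>'"
  define r' where "r' = map_pmf (\<lambda>(x, y). (\<theta> \<bullet> x, \<theta> \<bullet> y)) r"
  have "r' \<in> couplings (proj \<theta> \<Gamma>) (proj \<theta> \<Gamma>')"
    using r by (auto simp: r'_def couplings_def proj_def pmf.map_comp o_def case_prod_beta)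
  then have "W1 (proj \<theta> \<Gamma>) (proj \<theta> \<Gamma>') \<le> measure_pmf.expectation r (\<lambda>z. \<bar>\<theta> \<bullet> (fst z - snd z)\<bar>)"
    by (auto dest!: W1_le_expectation simp: r'_def case_prod_beta inner_diff_right)
  also have "\<dots> \<le> measure_pmf.expectation r (\<lambda>(x, y). norm (x - y))"
  proof (rule integral_mono)
    have "finite (set_pmf r)" using r fin by (rule finite_set_pmf_if_in_couplings)
    then show "integrable r (\<lambda>z. \<bar>\<theta> \<bullet> (fst z - snd z)\<bar>)" "integrable r (\<lambda>(x, y). norm (x - y))"
      by (simp_all add: integrable_measure_pmf_finite)
    show "\<bar>\<theta> \<bullet> (fst z - snd z)\<bar> \<le> (\<lambda>(x, y). norm (x - y)) z" for z
      using order_trans[OF Cauchy_Schwarz_ineq2 mult_left_le_one_le[OF norm_ge_zero norm_ge_zero \<theta>]]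
      by (cases z) simp
  qed
  finally show "W1 (proj \<theta> \<Gamma>) (proj \<theta> \<Gamma>') \<le> measure_pmf.expectation r (\<lambda>(x, y). norm (x - y))" .
qed

text \<open>When \<open>\<theta>\<close> is injective on both supports, a coupling of the projections is the image
  of a coupling of \<open>\<Gamma>\<close> and \<open>\<Gamma>'\<close>, whose cost is controlled pointwise.\<close>
lemma W1_le_mult_W1_proj:
  fixes \<Gamma> \<Gamma>' :: "'a::euclidean_space pmf"
  assumes fin: "finite (set_pmf \<Gamma>)" "finite (set_pmf \<Gamma>')" and C: "C > 0"
    and inj: "inj_on ((\<bullet>) \<theta>) (set_pmf \<Gamma>)" "inj_on ((\<bullet>) \<theta>) (set_pmf \<Gamma>')"
    and sep: "\<And>x y. x \<in> set_pmf \<Gamma> \<Longrightarrow> y \<in> set_pmf \<Gamma>' \<Longrightarrow> norm (x - y) \<le> C * \<bar>\<theta> \<bullet> (x - y)\<bar>"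
  shows "W1 \<Gamma> \<Gamma>' \<le> C * W1 (proj \<theta> \<Gamma>) (proj \<theta> \<Gamma>')"
proof -
  define lift where "lift = map_prod (the_inv_into (set_pmf \<Gamma>) ((\<bullet>) \<theta>)) (the_inv_into (set_pmf \<Gamma>') ((\<bullet>) \<theta>))"
  have "W1 \<Gamma> \<Gamma>' / C \<le> W1 (proj \<theta> \<Gamma>) (proj \<theta> \<Gamma>')"
    unfolding W1_def[of "proj \<theta> \<Gamma>"]
  proof (rule cINF_greatest)
    show "couplings (proj \<theta> \<Gamma>) (proj \<theta> \<Gamma>') \<noteq> {}" using pair_pmf_in_couplings by blast
    fix r assume r: "r \<in> couplings (proj \<theta> \<Gamma>) (proj \<theta> \<Gamma>')"
    then have marginals: "map_pmf fst r = map_pmf ((\<bullet>) \<theta>) \<Gamma>" "map_pmf snd r = map_pmf ((\<bullet>) \<theta>) \<Gamma>'"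
      by (auto simp: couplings_def proj_def)
    have inverse: "map_pmf (the_inv_into (set_pmf T) ((\<bullet>) \<theta>)) (map_pmf ((\<bullet>) \<theta>) T) = T"
      if "inj_on ((\<bullet>) \<theta>) (set_pmf T)" for T
      using that by (auto simp: pmf.map_comp the_inv_into_f_f intro: map_pmf_idI)
    have "map_pmf fst (map_pmf lift r) = \<Gamma>" "map_pmf snd (map_pmf lift r) = \<Gamma>'"
      unfolding lift_def pmf.map_comp fst_comp_map_prod snd_comp_map_prod
      by (simp_all flip: pmf.map_comp add: marginals inverse inj)
    then have "map_pmf lift r \<in> couplings \<Gamma> \<Gamma>'" by (simp add: couplings_def)
    from W1_le_expectation[OF this]
    have "W1 \<Gamma> \<Gamma>' \<le> measure_pmf.expectation r (\<lambda>z. norm (fst (lift z) - snd (lift z)))"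
      by (simp add: case_prod_beta)
    also have "\<dots> \<le> measure_pmf.expectation r (\<lambda>z. C * norm (fst z - snd z))"
    proof (rule integral_mono_AE)
      have "finite (set_pmf r)" using r fin by (auto intro: finite_set_pmf_if_in_couplings simp: proj_def)
      then show "integrable r (\<lambda>z. norm (fst (lift z) - snd (lift z)))" "integrable r (\<lambda>z. C * norm (fst z - snd z))"
        by (simp_all add: integrable_measure_pmf_finite)
      show "AE z in r. norm (fst (lift z) - snd (lift z)) \<le> (\<lambda>z. C * norm (fst z - snd z)) z"
      proof (rule AE_pmfI)
        fix z assume "z \<in> set_pmf r"
        then have "fst z \<in> (\<bullet>) \<theta> ` set_pmf \<Gamma>" "snd z \<in> (\<bullet>) \<theta> ` set_pmf \<Gamma>'"
          using set_pmf_subset_if_in_couplings[OF r] by (auto simp: proj_def)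
        then show "norm (fst (lift z) - snd (lift z)) \<le> (\<lambda>z. C * norm (fst z - snd z)) z"
          using sep inj by (auto simp: lift_def case_prod_beta inner_diff_right the_inv_into_f_f)
      qed
    qed
    also have "\<dots> = C * measure_pmf.expectation r (\<lambda>(a, b). norm (a - b))"
      by (simp add: case_prod_beta')
    finally show "W1 \<Gamma> \<Gamma>' / C \<le> measure_pmf.expectation r (\<lambda>(a, b). norm (a - b))"
      using C by (simp add: divide_le_eq mult.commute)
  qed
  then show ?thesis using C by (simp add: divide_le_eq mult.commute)
qed

theorem mainTheorem3:
  fixes \<Gamma> \<Gamma>' :: "'a::euclidean_space pmf" and k :: nat
  assumes "katomic k \<Gamma>" and "katomic k \<Gamma>'"
  shows "(SUP \<theta>\<in>sphere 0 1. W1 (proj \<theta> \<Gamma>) (proj \<theta> \<Gamma>')) \<le> W1 \<Gamma> \<Gamma>'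
       \<and> W1 \<Gamma> \<Gamma>' \<le> (real k)^2 * sqrt (real DIM('a)) * (SUP \<theta>\<in>sphere 0 1. W1 (proj \<theta> \<Gamma>) (proj \<theta> \<Gamma>'))"
proof
  have fin: "finite (set_pmf \<Gamma>)" "finite (set_pmf \<Gamma>')"
    and card: "card (set_pmf \<Gamma>) * card (set_pmf \<Gamma>') \<le> k^2"
    using assms by (auto simp: katomic_def power2_eq_square intro: mult_le_mono)
  have "1 \<le> card (set_pmf \<Gamma>)" using fin by (simp add: Suc_le_eq card_gt_0_iff set_pmf_not_empty)
  then have "k \<ge> 1" using assms(1) by (simp add: katomic_def)
  have proj_le: "W1 (proj \<theta> \<Gamma>) (proj \<theta> \<Gamma>') \<le> W1 \<Gamma> \<Gamma>'" if "\<theta> \<in> sphere 0 1" for \<theta> :: 'a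
    using fin that by (intro W1_proj_le_W1) auto
  have "sphere (0::'a) 1 \<noteq> {}" using norm_Basis nonempty_Basis by fastforce
  then show "(SUP \<theta>\<in>sphere 0 1. W1 (proj \<theta> \<Gamma>) (proj \<theta> \<Gamma>')) \<le> W1 \<Gamma> \<Gamma>'"
    using proj_le by (rule cSUP_least)
  obtain \<theta> :: 'a where "norm \<theta> = 1" "inj_on ((\<bullet>) \<theta>) (set_pmf \<Gamma>)" "inj_on ((\<bullet>) \<theta>) (set_pmf \<Gamma>')"
    "\<forall>x\<in>set_pmf \<Gamma>. \<forall>y\<in>set_pmf \<Gamma>'. norm (x - y) \<le> real (k^2) * sqrt DIM('a) * \<bar>\<theta> \<bullet> (x - y)\<bar>"
    using exists_unit_vector_separating[OF fin card] \<open>k \<ge> 1\<close> by auto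
  then have "W1 \<Gamma> \<Gamma>' \<le> (real k)^2 * sqrt DIM('a) * W1 (proj \<theta> \<Gamma>) (proj \<theta> \<Gamma>')"
    using fin \<open>k \<ge> 1\<close> by (intro W1_le_mult_W1_proj) (auto simp: proj_def)
  also have "\<dots> \<le> (real k)^2 * sqrt DIM('a) * (SUP \<theta>\<in>sphere 0 1. W1 (proj \<theta> \<Gamma>) (proj \<theta> \<Gamma>'))"
    using proj_le \<open>norm \<theta> = 1\<close>
    by (intro mult_left_mono cSUP_upper bdd_aboveI2[where M="W1 \<Gamma> \<Gamma>'"]) auto
  finally show "W1 \<Gamma> \<Gamma>' \<le> (real k)^2 * sqrt (real DIM('a)) * (SUP \<theta>\<in>sphere 0 1. W1 (proj \<theta> \<Gamma>) (proj \<theta> \<Gamma>'))" .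
qed

end
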